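(* Let $\mathbf{S}=(S_n)_{n\in\mathbb{N}}$ be a stationary ergodic information source with finite (totally ordered) alphabet $A$. Then the permutation entropy rate \[ h_m^{*}(\mathbf{S})=\lim_{L\to\infty}\frac{1}{L-1}H_m(R_1^L) \] exists and equals the metric entropy rate $h_m(\mathbf{S})=\lim_{L\to\infty}\frac{1}{L}H_m(S_1^L)$.
   Context: A finite-alphabet information source is a discrete-time stochastic process $\mathbf{S}=(S_n)_{n\in\mathbb{N}}$ with values in a finite totally ordered alphabet $A$; stationarity and ergodicity refer to its sequence-space model $(A^{\mathbb{N}},\mathcal{Z},m,\sigma)$, where $m$ is the induced shift-invariant distribution on output sequences and $\sigma$ the left shift. The rank variables are $R_n=\sum_{i=1}^{n}\delta(S_i\le S_n)$, $n\ge1$, where $\delta(P)=1$ if the proposition $P$ holds and $0$ otherwise; $R_1^L=R_1\cdots R_L$ and $S_1^L=S_1\cdots S_L$. $H_m(Z)=-\sum_z\Pr(z)\log_2\Pr(z)$ is the Shannon entropy of a discrete random variable (or word) $Z$. The quantity $\frac{1}{L-1}H_m(R_1^L)$ is the permutation entropy of order $L\ge 2$, equivalently the entropy of the distribution of order patterns (permutations) of the block $S_1^L$ divided by $L-1$. *)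

theory Defs
  imports "HOL-Probability.Probability"
begin

text \<open>Sequence-space model: a probability measure m on sequences nat => 'a
 (sequence index 0 corresponds to the paper's time 1), S_n x = x n.\<close>

definition seq_space :: "(nat \<Rightarrow> 'a) measure" where
  "seq_space = PiM UNIV (\<lambda>_. count_space UNIV)"

definition lshift :: "(nat \<Rightarrow> 'a) \<Rightarrow> (nat \<Rightarrow> 'a)" where
  "lshift x = (\<lambda>n. x (Suc n))"

definition stationary_source :: "(nat \<Rightarrow> 'a) measure \<Rightarrow> bool" where
  "stationary_source m \<longleftrightarrow> prob_space m \<and> sets m = sets seq_space
     \<and> distr m m lshift = m"

definition ergodic_source :: "(nat \<Rightarrow> 'a) measure \<Rightarrow> bool" where
  "ergodic_source m \<longleftrightarrow> (\<forall>B \<in> sets m. lshift -` B \<inter> space m = B \<longrightarrow>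
      measure m B = 0 \<or> measure m B = 1)"

definition shannon_entropy :: "'b measure \<Rightarrow> ('b \<Rightarrow> 'c) \<Rightarrow> real" where
  "shannon_entropy m Z = - (\<Sum>z \<in> Z ` space m.
      measure m {x \<in> space m. Z x = z} * log 2 (measure m {x \<in> space m. Z x = z}))"

definition block :: "nat \<Rightarrow> (nat \<Rightarrow> 'a) \<Rightarrow> 'a list" where
  "block L x = map x [0..<L]"

text \<open>Rank variable R_{n+1} = #{i <= n. x i <= x n} (0-indexed).\<close>
definition rank_var :: "nat \<Rightarrow> (nat \<Rightarrow> 'a::linorder) \<Rightarrow> nat" where
  "rank_var n x = card {i. i \<le> n \<and> x i \<le> x n}"

definition rank_block :: "nat \<Rightarrow> (nat \<Rightarrow> 'a::linorder) \<Rightarrow> nat list" where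
  "rank_block L x = map (\<lambda>n. rank_var n x) [0..<L]"

end

theory Submission
  imports Defs "HOL-Real_Asymp.Real_Asymp"
begin

(* By stationarity the block entropies H(S_1^L) are subadditive, so H(S_1^L)/L converges
   (Fekete). The rank word R_1^L is a function of S_1^L. Conversely, the ranks fix the
   order of the positions in the stable sort of S_1^L and the counts #{j < L. S_j <= c},
   c in A, fix the sorted values, so S_1^L is a function of R_1^L and these counts. The
   counts take at most (L+1)^|A| values, hence
     H(S_1^L) - |A| log (L+1) <= H(R_1^L) <= H(S_1^L),
   and the two entropy rates coincide. *)

lemma shannon_entropy_nonneg:
  assumes "prob_space M"
  shows "0 \<le> shannon_entropy M Z"
proof -
  have "p * log 2 p \<le> 0" if "0 \<le> p" "p \<le> 1" for p :: real
    using that by (cases "p = 0") (auto intro: mult_nonneg_nonpos)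
  then show ?thesis
    unfolding shannon_entropy_def
    using prob_space.prob_le_1[OF assms] by (simp add: sum_nonpos)
qed

context prob_space
begin

lemma shannon_entropy_eq_entropy:
  assumes "simple_function M X"
  shows "shannon_entropy M X = entropy 2 (count_space (X ` space M)) X"
proof -
  interpret information_space M 2 by standard simp
  have "{x \<in> space M. X x = z} = X -` {z} \<inter> space M" for z by auto
  then show ?thesis
    using entropy_simple_distributed[OF simple_distributedI[OF assms measure_nonneg refl]]
    by (simp add: shannon_entropy_def)
qed

lemma shannon_entropy_comp_le:
  assumes "simple_function M X"
  shows "shannon_entropy M (\<lambda>x. f (X x)) \<le> shannon_entropy M X"
proof -
  interpret information_space M 2 by standard simp
  have "simple_function M (f \<circ> X)" using assms by (rule simple_function_compose)
  with entropy_data_processing[OF assms, of f] assms show ?thesis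
    by (simp add: shannon_entropy_eq_entropy comp_def)
qed

lemma shannon_entropy_pair_le:
  assumes X: "simple_function M X" and Y: "simple_function M Y"
  shows "shannon_entropy M (\<lambda>x. (X x, Y x)) \<le> shannon_entropy M X + shannon_entropy M Y"
proof -
  interpret information_space M 2 by standard simp
  show ?thesis
    using entropy_chain_rule[OF X Y] conditional_entropy_less_eq_entropy[OF Y X]
      X Y simple_function_Pair[OF X Y]
    by (simp add: shannon_entropy_eq_entropy)
qed

lemma shannon_entropy_le_card:
  assumes "simple_function M X"
  shows "shannon_entropy M X \<le> log 2 (card (X ` space M))"
proof -
  interpret information_space M 2 by standard simp
  show ?thesis
    using entropy_le_card[OF simple_distributedI[OF assms measure_nonneg refl]] assms
    by (simp add: shannon_entropy_eq_entropy)
qed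

end

lemma shannon_entropy_comp_measure_preserving:
  assumes T: "T \<in> M \<rightarrow>\<^sub>M M" "distr M M T = M" "T ` space M = space M"
    and Z: "simple_function M Z"
  shows "shannon_entropy M (\<lambda>x. Z (T x)) = shannon_entropy M Z"
proof -
  have "(\<lambda>x. Z (T x)) ` space M = Z ` space M" using T(3) by (metis image_image)
  moreover have "measure M {x \<in> space M. Z (T x) = z} = measure M {x \<in> space M. Z x = z}" for z
  proof -
    have "{x \<in> space M. Z x = z} \<in> sets M"
      using simple_functionD(2)[OF Z, of "{z}"] by (simp add: vimage_def Int_def conj_commute)
    then have "measure (distr M M T) {x \<in> space M. Z x = z}
        = measure M (T -` {x \<in> space M. Z x = z} \<inter> space M)"
      by (rule measure_distr[OF T(1)])
    moreover have "T -` {x \<in> space M. Z x = z} \<inter> space M = {x \<in> space M. Z (T x) = z}"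
      using T(1) by (auto dest: measurable_space)
    ultimately show ?thesis using T(2) by simp
  qed
  ultimately show ?thesis by (simp add: shannon_entropy_def)
qed

definition determined_by_block :: "nat \<Rightarrow> ((nat \<Rightarrow> 'a) \<Rightarrow> 'b) \<Rightarrow> bool" where
  "determined_by_block L Z \<longleftrightarrow> (\<forall>x y. (\<forall>i<L. x i = y i) \<longrightarrow> Z x = Z y)"

lemma determined_by_blockD:
  "determined_by_block L Z \<Longrightarrow> (\<And>i. i < L \<Longrightarrow> x i = y i) \<Longrightarrow> Z x = Z y"
  unfolding determined_by_block_def by blast

lemma determined_by_block_factors:
  assumes "determined_by_block L Z"
  shows "Z (\<lambda>i. block L x ! i) = Z x"
  by (rule determined_by_blockD[OF assms]) (simp add: block_def)

lemma determined_by_block_block: "determined_by_block L (block L)"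
  unfolding determined_by_block_def block_def by simp

lemma determined_by_block_shift:
  "determined_by_block L Z \<Longrightarrow> determined_by_block (L + a) (\<lambda>x. Z (\<lambda>n. x (n + a)))"
  unfolding determined_by_block_def by simp

lemma space_seq_space: "space seq_space = UNIV"
  by (simp add: seq_space_def space_PiM)

lemma lshift_measurable: "lshift \<in> seq_space \<rightarrow>\<^sub>M seq_space"
  unfolding lshift_def seq_space_def by (rule measurable_PiM_single') (auto simp: space_PiM)

lemma surj_lshift: "surj lshift"
proof (rule surjI)
  show "lshift (\<lambda>n. x (n - 1)) = x" for x :: "nat \<Rightarrow> 'a" by (simp add: lshift_def)
qed

lemma simple_function_block:
  fixes m :: "(nat \<Rightarrow> 'a::finite) measure"
  assumes sets: "sets m = sets seq_space"
  shows "simple_function m (block L)"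
  unfolding simple_function_def
proof
  have "block L ` space m \<subseteq> {w. set w \<subseteq> UNIV \<and> length w = L}"
    by (auto simp: block_def)
  then show "finite (block L ` space m)"
    by (rule finite_subset) (rule finite_lists_length_eq, simp)
  show "\<forall>w\<in>block L ` space m. block L -` {w} \<inter> space m \<in> sets m"
  proof
    fix w assume "w \<in> block L ` space m"
    then obtain y where "w = block L y" by blast
    then have "block L -` {w} \<inter> space m = {x. \<forall>i<L. x i = y i}"
      using sets_eq_imp_space_eq[OF sets] by (auto simp: space_seq_space block_def)
    moreover have "Measurable.pred seq_space (\<lambda>x::nat \<Rightarrow> 'a. \<forall>i<L. x i = y i)"
      unfolding seq_space_def by measurable
    ultimately show "block L -` {w} \<inter> space m \<in> sets m"
      by (simp add: sets pred_def space_seq_space)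
  qed
qed

lemma simple_function_determined_by_block:
  fixes m :: "(nat \<Rightarrow> 'a::finite) measure"
  assumes "sets m = sets seq_space" and "determined_by_block L Z"
  shows "simple_function m Z"
  using simple_function_compose1[OF simple_function_block[OF assms(1), of L],
      of "\<lambda>w. Z (\<lambda>i. w ! i)"]
  by (simp add: determined_by_block_factors[OF assms(2)])

lemma shannon_entropy_lshift:
  assumes st: "stationary_source m" and Z: "simple_function m Z"
  shows "shannon_entropy m (\<lambda>x. Z (lshift x)) = shannon_entropy m Z"
proof (rule shannon_entropy_comp_measure_preserving[OF _ _ _ Z])
  have sets: "sets m = sets seq_space"
    using st by (simp add: stationary_source_def)
  show "lshift \<in> m \<rightarrow>\<^sub>M m"
    using lshift_measurable measurable_cong_sets[OF sets sets] by simp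
  show "distr m m lshift = m"
    using st by (simp add: stationary_source_def)
  show "lshift ` space m = space m"
    using surj_lshift sets_eq_imp_space_eq[OF sets] by (simp add: space_seq_space)
qed

lemma shannon_entropy_shift:
  fixes m :: "(nat \<Rightarrow> 'a::finite) measure"
  assumes st: "stationary_source m" and Z: "determined_by_block L Z"
  shows "shannon_entropy m (\<lambda>x. Z (\<lambda>n. x (n + a))) = shannon_entropy m Z"
proof (induction a)
  case 0
  show ?case by (simp only: add_0_right)
next
  case (Suc a)
  have sets: "sets m = sets seq_space"
    using st by (simp add: stationary_source_def)
  have "shannon_entropy m (\<lambda>x. Z (\<lambda>n. x (n + Suc a)))
      = shannon_entropy m (\<lambda>x. Z (\<lambda>n. lshift x (n + a)))"
    by (simp add: lshift_def)
  also have "\<dots> = shannon_entropy m (\<lambda>x. Z (\<lambda>n. x (n + a)))"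
    using shannon_entropy_lshift[OF st simple_function_determined_by_block[OF sets
          determined_by_block_shift[OF Z, of a]]] .
  also have "\<dots> = shannon_entropy m Z" by (rule Suc.IH)
  finally show ?case .
qed

lemma block_add: "block (a + b) x = block a x @ block b (\<lambda>n. x (n + a))"
proof -
  have "[0..<a + b] = [0..<a] @ [a..<a + b]"
    using upt_add_eq_append[of 0 a b] by simp
  also have "[a..<a + b] = map (\<lambda>i. i + a) [0..<b]"
    using map_add_upt[of a b] by (simp add: add.commute)
  finally show ?thesis unfolding block_def by simp
qed

lemma shannon_entropy_block_subadditive:
  fixes m :: "(nat \<Rightarrow> 'a::finite) measure"
  assumes st: "stationary_source m"
  shows "shannon_entropy m (block (a + b)) \<le> shannon_entropy m (block a) + shannon_entropy m (block b)"
proof -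
  interpret prob_space m using st by (simp add: stationary_source_def)
  have sets: "sets m = sets seq_space" using st by (simp add: stationary_source_def)
  let ?tail = "\<lambda>x. block b (\<lambda>n. x (n + a))"
  have head: "simple_function m (block a)" by (rule simple_function_block[OF sets])
  have tail: "simple_function m ?tail"
    by (rule simple_function_determined_by_block[OF sets determined_by_block_shift[OF determined_by_block_block]])
  have "shannon_entropy m (block (a + b)) = shannon_entropy m (\<lambda>x. case_prod append (block a x, ?tail x))"
    by (simp add: block_add[abs_def])
  also have "\<dots> \<le> shannon_entropy m (\<lambda>x. (block a x, ?tail x))"
    by (rule shannon_entropy_comp_le[OF simple_function_Pair[OF head tail]])
  also have "\<dots> \<le> shannon_entropy m (block a) + shannon_entropy m ?tail"
    by (rule shannon_entropy_pair_le[OF head tail])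
  also have "shannon_entropy m ?tail = shannon_entropy m (block b)"
    by (rule shannon_entropy_shift[OF st determined_by_block_block])
  finally show ?thesis .
qed

lemma subadditive_mult_add_le:
  fixes a :: "nat \<Rightarrow> real"
  assumes sub: "\<And>m n. a (m + n) \<le> a m + a n"
  shows "a (q * k + r) \<le> real q * a k + a r"
proof (induction q)
  case (Suc q)
  have "a (Suc q * k + r) = a (k + (q * k + r))" by (simp add: algebra_simps)
  also have "\<dots> \<le> a k + a (q * k + r)" by (rule sub)
  finally show ?case using Suc by (simp add: algebra_simps)
qed simp

lemma subadditive_div_le:
  fixes a :: "nat \<Rightarrow> real"
  assumes sub: "\<And>m n. a (m + n) \<le> a m + a n" and nonneg: "\<And>n. 0 \<le> a n"
    and "0 < k" "0 < n"
  shows "a n / n \<le> a k / k + Max (a ` {..<k}) / n"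
proof -
  have "a n = a (n div k * k + n mod k)" by simp
  also have "\<dots> \<le> real (n div k) * a k + a (n mod k)" by (rule subadditive_mult_add_le[OF sub])
  also have "real (n div k) * a k \<le> (real n / real k) * a k"
    using nonneg by (intro mult_right_mono of_nat_div_le_of_nat)
  also have "a (n mod k) \<le> Max (a ` {..<k})"
    using \<open>0 < k\<close> by (intro Max_ge) auto
  finally show ?thesis
    using \<open>0 < n\<close> by (simp add: field_simps)
qed

lemma fekete:
  fixes a :: "nat \<Rightarrow> real"
  assumes sub: "\<And>m n. a (m + n) \<le> a m + a n" and nonneg: "\<And>n. 0 \<le> a n"
  shows "(\<lambda>n. a n / n) \<longlonglongrightarrow> (INF n\<in>{0<..}. a n / n)"
proof (rule LIMSEQ_I)
  define l where "l = (INF n\<in>{0<..}. a n / n)"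
  have bdd: "bdd_below ((\<lambda>n. a n / n) ` {0<..})"
    using nonneg by (intro bdd_belowI[of _ 0]) auto
  fix e :: real assume "0 < e"
  then obtain k where k: "0 < k" "a k / k < l + e / 2"
    using cInf_lessD[of "(\<lambda>n. a n / n) ` {0<..}" "l + e / 2"] unfolding l_def by force
  define M where "M = Max (a ` {..<k})"
  obtain n0 :: nat where n0: "2 * M / e < n0"
    using reals_Archimedean2 by blast
  show "\<exists>n0. \<forall>n\<ge>n0. norm (a n / n - l) < e"
  proof (intro exI allI impI)
    fix n assume n: "Suc n0 \<le> n"
    have "real n0 < n" using n by simp
    then have "e * n0 < e * n" using \<open>0 < e\<close> by simp
    moreover have "2 * M < e * n0" using n0 \<open>0 < e\<close> by (simp add: divide_less_eq mult.commute)
    ultimately have "2 * M < e * n" by linarith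
    then have "M / n < e / 2"
      using n by (simp add: field_simps)
    then have "a n / n < l + e"
      using subadditive_div_le[OF sub nonneg \<open>0 < k\<close>, of n, folded M_def] n k(2) by linarith
    moreover have "l \<le> a n / n"
      unfolding l_def using n bdd by (intro cInf_lower) auto
    ultimately show "norm (a n / n - l) < e" by simp
  qed
qed

lemma convergent_block_entropy_rate:
  fixes m :: "(nat \<Rightarrow> 'a::finite) measure"
  assumes "stationary_source m"
  shows "convergent (\<lambda>L. shannon_entropy m (block L) / L)"
proof -
  have "prob_space m" using assms by (simp add: stationary_source_def)
  then show ?thesis
    using fekete[OF shannon_entropy_block_subadditive[OF assms] shannon_entropy_nonneg]
    by (auto intro: convergentI)
qed

lemma rank_var_eq_Suc_card: "rank_var n x = Suc (card {i. i < n \<and> x i \<le> x n})"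
proof -
  have "{i. i \<le> n \<and> x i \<le> x n} = insert n {i. i < n \<and> x i \<le> x n}" by auto
  then show ?thesis unfolding rank_var_def by simp
qed

lemma rank_block_eq_imp_le_iff:
  fixes x y :: "nat \<Rightarrow> 'a::linorder"
  assumes ranks: "rank_block L x = rank_block L y"
  shows "n < L \<Longrightarrow> i < n \<Longrightarrow> x i \<le> x n \<longleftrightarrow> y i \<le> y n"
proof (induction n arbitrary: i rule: less_induct)
  case (less n)
  define Dx where "Dx = {i. i < n \<and> x i \<le> x n}"
  define Dy where "Dy = {i. i < n \<and> y i \<le> y n}"
  have "rank_var n x = rank_var n y"
    using ranks less.prems(1) unfolding rank_block_def by (simp add: map_eq_conv)
  then have same_card: "card Dx = card Dy"
    unfolding Dx_def Dy_def rank_var_eq_Suc_card by simp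
  \<comment> \<open>Dx and Dy are down-closed for the order of the earlier values, on which x and y agree.\<close>
  have "Dx \<subseteq> Dy \<or> Dy \<subseteq> Dx"
  proof (rule ccontr)
    assume "\<not> ?thesis"
    then obtain i j where i: "i < n" "x i \<le> x n" "\<not> y i \<le> y n"
      and j: "j < n" "y j \<le> y n" "\<not> x j \<le> x n"
      unfolding Dx_def Dy_def by auto
    consider "i < j" | "j < i" using i j by (metis linorder_neqE_nat)
    then show False
    proof cases
      case 1
      have "x i \<le> x j" using i(2) j(3) by (metis le_cases order.trans)
      then have "y i \<le> y j" using less.IH[of j i] less.prems(1) 1 j(1) by simp
      then show False using i(3) j(2) by (metis order.trans)
    next
      case 2
      have "y j \<le> y i" using i(3) j(2) by (metis le_cases order.trans)
      then have "x j \<le> x i" using less.IH[of i j] less.prems(1) 2 i(1) by simp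
      then show False using i(2) j(3) by (metis order.trans)
    qed
  qed
  then have "Dx = Dy"
    using same_card by (auto simp: Dx_def Dy_def dest: card_subset_eq[rotated])
  then show ?case using less.prems unfolding Dx_def Dy_def by blast
qed

definition value_counts :: "nat \<Rightarrow> (nat \<Rightarrow> 'a::linorder) \<Rightarrow> 'a \<Rightarrow> nat" where
  "value_counts L x c = card {j. j < L \<and> x j \<le> c}"

text \<open>Position (from 0) of entry n in the stable sort of the block x 0, ..., x (L - 1).\<close>
definition sort_position :: "nat \<Rightarrow> (nat \<Rightarrow> 'a::linorder) \<Rightarrow> nat \<Rightarrow> nat" where
  "sort_position L x n = card {j. j < L \<and> (x j < x n \<or> x j = x n \<and> j < n)}"

lemma nth_eq_Least_value_counts:
  assumes "n < L"
  shows "x n = (LEAST c. sort_position L x n < value_counts L x c)"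
proof (rule Least_equality[symmetric])
  let ?before = "{j. j < L \<and> (x j < x n \<or> x j = x n \<and> j < n)}"
  have "?before \<subset> {j. j < L \<and> x j \<le> x n}"
    using assms by auto
  then show "sort_position L x n < value_counts L x (x n)"
    unfolding sort_position_def value_counts_def by (intro psubset_card_mono) auto
  show "x n \<le> c" if "sort_position L x n < value_counts L x c" for c
  proof (rule ccontr)
    assume "\<not> x n \<le> c"
    then have "{j. j < L \<and> x j \<le> c} \<subseteq> ?before" by auto
    then have "value_counts L x c \<le> sort_position L x n"
      unfolding sort_position_def value_counts_def by (intro card_mono) auto
    with that show False by simp
  qed
qed

lemma sort_position_eq_if_rank_block_eq:
  fixes x y :: "nat \<Rightarrow> 'a::linorder"
  assumes ranks: "rank_block L x = rank_block L y" and "n < L"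
  shows "sort_position L x n = sort_position L y n"
proof -
  have "(x j < x n \<or> x j = x n \<and> j < n) \<longleftrightarrow> (y j < y n \<or> y j = y n \<and> j < n)"
    if "j < L" for j
  proof -
    consider "j < n" | "j = n" | "n < j" by linarith
    then show ?thesis
    proof cases
      case 1
      then show ?thesis using rank_block_eq_imp_le_iff[OF ranks \<open>n < L\<close> 1] by auto
    next
      case 3
      then show ?thesis using rank_block_eq_imp_le_iff[OF ranks \<open>j < L\<close> 3] by auto
    qed simp
  qed
  then show ?thesis
    unfolding sort_position_def by (metis (no_types, lifting) Collect_cong)
qed

lemma block_eq_if_rank_block_value_counts_eq:
  fixes x y :: "nat \<Rightarrow> 'a::linorder"
  assumes "rank_block L x = rank_block L y" and "value_counts L x = value_counts L y"
  shows "block L x = block L y"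
proof -
  have "x n = y n" if "n < L" for n
    using nth_eq_Least_value_counts[OF that, of x] nth_eq_Least_value_counts[OF that, of y]
      sort_position_eq_if_rank_block_eq[OF assms(1) that] assms(2) by simp
  then show ?thesis by (simp add: block_def)
qed

lemma determined_by_block_rank_block: "determined_by_block L (rank_block L)"
  unfolding determined_by_block_def rank_block_def rank_var_def
  by (auto intro!: arg_cong[where f = card])

lemma determined_by_block_value_counts: "determined_by_block L (value_counts L)"
  unfolding determined_by_block_def value_counts_def
  by (auto intro!: ext arg_cong[where f = card])

lemma card_range_value_counts:
  "card (range (value_counts L :: (nat \<Rightarrow> 'a::{linorder,finite}) \<Rightarrow> 'a \<Rightarrow> nat))
    \<le> (L + 1) ^ CARD('a)"
proof -
  have "value_counts L x c \<le> L" for x :: "nat \<Rightarrow> 'a" and c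
    unfolding value_counts_def using card_mono[of "{..<L}" "{j. j < L \<and> x j \<le> c}"] by auto
  then have "range (value_counts L :: (nat \<Rightarrow> 'a) \<Rightarrow> 'a \<Rightarrow> nat) \<subseteq> PiE UNIV (\<lambda>_. {..L})"
    by (auto simp: PiE_UNIV_domain)
  then have "card (range (value_counts L :: (nat \<Rightarrow> 'a) \<Rightarrow> 'a \<Rightarrow> nat))
      \<le> card (PiE (UNIV :: 'a set) (\<lambda>_. {..L}))"
    by (intro card_mono finite_PiE) auto
  then show ?thesis by (simp add: card_PiE)
qed

lemma shannon_entropy_rank_block_le:
  fixes m :: "(nat \<Rightarrow> 'a::{linorder,finite}) measure"
  assumes "prob_space m" and sets: "sets m = sets seq_space"
  shows "shannon_entropy m (rank_block L) \<le> shannon_entropy m (block L)"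
  using prob_space.shannon_entropy_comp_le[OF assms(1) simple_function_block[OF sets, of L],
      of "\<lambda>w. rank_block L (\<lambda>i. w ! i)"]
  by (simp add: determined_by_block_factors[OF determined_by_block_rank_block])

lemma shannon_entropy_block_le_rank_block:
  fixes m :: "(nat \<Rightarrow> 'a::{linorder,finite}) measure"
  assumes "prob_space m" and sets: "sets m = sets seq_space"
  shows "shannon_entropy m (block L) \<le> shannon_entropy m (rank_block L) + CARD('a) * log 2 (real L + 1)"
proof -
  interpret prob_space m by fact
  have space: "space m = UNIV"
    using sets_eq_imp_space_eq[OF sets] by (simp add: space_seq_space)
  let ?pair = "\<lambda>x. (rank_block L x, value_counts L x)"
  define decode where "decode p = block L (SOME x :: nat \<Rightarrow> 'a. ?pair x = p)" for p
  have decode_pair: "block L = (\<lambda>x. decode (?pair x))"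
  proof
    fix x :: "nat \<Rightarrow> 'a"
    have "?pair (SOME y. ?pair y = ?pair x) = ?pair x"
      using someI[of "\<lambda>y. ?pair y = ?pair x" x] by simp
    then show "block L x = decode (?pair x)"
      unfolding decode_def by (intro block_eq_if_rank_block_value_counts_eq) simp_all
  qed
  have ranks: "simple_function m (rank_block L)"
    by (rule simple_function_determined_by_block[OF sets determined_by_block_rank_block])
  have counts: "simple_function m (value_counts L)"
    by (rule simple_function_determined_by_block[OF sets determined_by_block_value_counts])
  have counts_bound: "shannon_entropy m (value_counts L) \<le> CARD('a) * log 2 (real L + 1)"
  proof -
    have "shannon_entropy m (value_counts L) \<le> log 2 (card (value_counts L ` space m))"
      by (rule shannon_entropy_le_card[OF counts])
    also have "\<dots> \<le> log 2 ((L + 1) ^ CARD('a))"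
    proof (rule log_mono)
      show "0 < real (card (value_counts L ` space m))"
        using simple_functionD(1)[OF counts] not_empty by (simp add: card_gt_0_iff)
      have "card (value_counts L ` space m) \<le> (L + 1) ^ CARD('a)"
        using card_range_value_counts[where 'a = 'a, of L] by (simp add: space)
      then show "real (card (value_counts L ` space m)) \<le> real ((L + 1) ^ CARD('a))"
        by (simp only: of_nat_le_iff)
    qed simp
    also have "\<dots> = CARD('a) * log 2 (real L + 1)"
      by (simp add: log_nat_power add.commute)
    finally show ?thesis .
  qed
  have "shannon_entropy m (block L) = shannon_entropy m (\<lambda>x. decode (?pair x))"
    by (subst decode_pair) (rule refl)
  also have "\<dots> \<le> shannon_entropy m ?pair"
    by (rule shannon_entropy_comp_le[OF simple_function_Pair[OF ranks counts]])
  also have "\<dots> \<le> shannon_entropy m (rank_block L) + shannon_entropy m (value_counts L)"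
    by (rule shannon_entropy_pair_le[OF ranks counts])
  finally show ?thesis
    using counts_bound by linarith
qed

lemma tendsto_div_if_logarithmic_gap:
  fixes a b :: "nat \<Rightarrow> real"
  assumes rate: "(\<lambda>n. a n / n) \<longlonglongrightarrow> h"
    and lower: "\<And>n. a n \<le> b n + c * log 2 (real n + 1)" and upper: "\<And>n. b n \<le> a n"
  shows "(\<lambda>n. b n / n) \<longlonglongrightarrow> h"
proof (rule tendsto_sandwich[where f = "\<lambda>n. (a n - c * log 2 (real n + 1)) / n"])
  show "\<forall>\<^sub>F n in sequentially. (a n - c * log 2 (real n + 1)) / n \<le> b n / n"
    using lower by (intro always_eventually allI divide_right_mono) (auto simp: algebra_simps)
  show "\<forall>\<^sub>F n in sequentially. b n / n \<le> a n / n"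
    using upper by (intro always_eventually allI divide_right_mono) auto
  have "(\<lambda>n. log 2 (real n + 1) / n) \<longlonglongrightarrow> 0" by real_asymp
  then have "(\<lambda>n. a n / n - c * (log 2 (real n + 1) / n)) \<longlonglongrightarrow> h - c * 0"
    by (intro tendsto_intros rate)
  then show "(\<lambda>n. (a n - c * log 2 (real n + 1)) / n) \<longlonglongrightarrow> h"
    by (simp add: diff_divide_distrib)
qed (rule rate)

lemma tendsto_div_minus_one:
  fixes f :: "nat \<Rightarrow> real"
  assumes "(\<lambda>n. f n / n) \<longlonglongrightarrow> h"
  shows "(\<lambda>n. f n / (real n - 1)) \<longlonglongrightarrow> h"
proof -
  have "(\<lambda>n. n / (real n - 1)) \<longlonglongrightarrow> 1" by real_asymp
  then have "(\<lambda>n. f n / n * (n / (real n - 1))) \<longlonglongrightarrow> h"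
    using tendsto_mult[OF assms] by fastforce
  moreover have "\<forall>\<^sub>F n in sequentially. f n / n * (n / (real n - 1)) = f n / (real n - 1)"
    using eventually_gt_at_top[of "0::nat"] by eventually_elim simp
  ultimately show ?thesis by (rule Lim_transform_eventually)
qed

theorem theorem1:
  fixes m :: "(nat \<Rightarrow> 'a::{linorder,finite}) measure"
  assumes "stationary_source m" and "ergodic_source m"
  shows "\<exists>h::real.
    (\<lambda>L. shannon_entropy m (rank_block L) / (real L - 1)) \<longlonglongrightarrow> h \<and>
    (\<lambda>L. shannon_entropy m (block L) / real L) \<longlonglongrightarrow> h"
proof -
  have P: "prob_space m" and sets: "sets m = sets seq_space"
    using assms(1) by (auto simp: stationary_source_def)
  obtain h where block_rate: "(\<lambda>L. shannon_entropy m (block L) / L) \<longlonglongrightarrow> h"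
    using convergent_block_entropy_rate[OF assms(1)] by (auto simp: convergent_def)
  have "(\<lambda>L. shannon_entropy m (rank_block L) / L) \<longlonglongrightarrow> h"
    using block_rate shannon_entropy_block_le_rank_block[OF P sets]
      shannon_entropy_rank_block_le[OF P sets]
    by (rule tendsto_div_if_logarithmic_gap)
  then have "(\<lambda>L. shannon_entropy m (rank_block L) / (real L - 1)) \<longlonglongrightarrow> h"
    by (rule tendsto_div_minus_one)
  with block_rate show ?thesis by blast
qed

end
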